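(* Consider chained iterated learning in the Gaussian setting with prior $N(\bar\mu,\bar\sigma^2)$, likelihood $N(h,\sigma^2)$, initial teacher distribution $N(\mu_0,\sigma_0^2)$, and sample sizes $m_t$. For any $0<\varepsilon<1$ and any constant $c>0$, the sample size sequence $$m_t=\frac{|\mu_0-\bar\mu|}{\varepsilon}\Bigl(1+\frac1c\Bigr)\Bigl(\frac{\sigma}{\bar\sigma}\Bigr)^2t^{1+c}$$ makes chained iterated learning strongly $\varepsilon$-self-sustaining, i.e., $|\mathbb E\,\mu_t-\mu_0|\le\varepsilon$ for all $t$ and $\sigma_t^2+\operatorname{Var}\mu_t\to0$ as $t\to\infty$.
   Context: Gaussian iterated learning: hypotheses $h\in\mathbb R$; every learner has prior $N(\bar\mu,\bar\sigma^2)$; data generated from hypothesis $h$ is $d=h+\phi$ with $\phi\sim N(0,\sigma^2)$. Learner $0$ is the original teacher, with "posterior" $N(\mu_0,\sigma_0^2)$. Write $\tau=1/\sigma^2$, $\bar\tau=1/\bar\sigma^2$. Learner $t\ge1$ receives data $d_{t,1},\dots,d_{t,m_t}$ from learner $t-1$ and Bayes-updates, obtaining the Gaussian posterior $N(\mu_t,\sigma_t^2)$ with $\mu_t=\frac{\bar\tau\bar\mu+\tau(d_{t,1}+\dots+d_{t,m_t})}{\bar\tau+m_t\tau}$ and $1/\sigma_t^2=\bar\tau+m_t\tau$. Each datum is drawn from learner $t-1$'s posterior with noise: the $d_{t,i}$ are mutually independent, each distributed as $N(\mathbb E\mu_{t-1},\operatorname{Var}\mu_{t-1}+\sigma_{t-1}^2+\sigma^2)$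 (with $\mu_0$ deterministic, $\operatorname{Var}\mu_0=0$), so that $\mathbb E\mu_t=\frac{\bar\tau\bar\mu+m_t\tau\,\mathbb E\mu_{t-1}}{\bar\tau+m_t\tau}$ and $\operatorname{Var}\mu_t=\frac{m_t\tau^2}{(\bar\tau+m_t\tau)^2}(\operatorname{Var}\mu_{t-1}+\sigma_{t-1}^2+\sigma^2)$. Iterated learning is $\varepsilon$-self-sustaining if $|\mathbb E\mu_t-\mu_0|\le\varepsilon$ and $\sigma_t^2+\operatorname{Var}\mu_t$ stays bounded for all $t$; strongly $\varepsilon$-self-sustaining if moreover $\sigma_t^2+\operatorname{Var}\mu_t\to0$. *)

theory Defs
  imports Complex_Main
begin

text \<open>Parameters:
  m :: nat \<Rightarrow> real   sample sizes (m t used by learner t \<ge> 1),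
  taub = 1/sigmabar^2 (prior precision), mub = prior mean,
  tau = 1/sigma^2 (noise precision), mu0, sigma0 the original teacher.\<close>

primrec Emu :: "(nat \<Rightarrow> real) \<Rightarrow> real \<Rightarrow> real \<Rightarrow> real \<Rightarrow> real \<Rightarrow> nat \<Rightarrow> real" where
  "Emu m taub mub tau mu0 0 = mu0"
| "Emu m taub mub tau mu0 (Suc t) =
     (taub * mub + m (Suc t) * tau * Emu m taub mub tau mu0 t) / (taub + m (Suc t) * tau)"

primrec sigsq :: "(nat \<Rightarrow> real) \<Rightarrow> real \<Rightarrow> real \<Rightarrow> real \<Rightarrow> nat \<Rightarrow> real" where
  "sigsq m taub tau sigma0 0 = sigma0\<^sup>2"
| "sigsq m taub tau sigma0 (Suc t) = 1 / (taub + m (Suc t) * tau)"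

primrec Varmu :: "(nat \<Rightarrow> real) \<Rightarrow> real \<Rightarrow> real \<Rightarrow> real \<Rightarrow> nat \<Rightarrow> real" where
  "Varmu m taub tau sigma0 0 = 0"
| "Varmu m taub tau sigma0 (Suc t) =
     m (Suc t) * tau\<^sup>2 / (taub + m (Suc t) * tau)\<^sup>2
       * (Varmu m taub tau sigma0 t + sigsq m taub tau sigma0 t + 1 / tau)"

definition self_sustaining ::
  "(nat \<Rightarrow> real) \<Rightarrow> real \<Rightarrow> real \<Rightarrow> real \<Rightarrow> real \<Rightarrow> real \<Rightarrow> real \<Rightarrow> bool" where
  "self_sustaining m taub mub tau mu0 sigma0 eps \<longleftrightarrow>
     (\<forall>t. \<bar>Emu m taub mub tau mu0 t - mu0\<bar> \<le> eps) \<and>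
     Bseq (\<lambda>t. sigsq m taub tau sigma0 t + Varmu m taub tau sigma0 t)"

definition strongly_self_sustaining ::
  "(nat \<Rightarrow> real) \<Rightarrow> real \<Rightarrow> real \<Rightarrow> real \<Rightarrow> real \<Rightarrow> real \<Rightarrow> real \<Rightarrow> bool" where
  "strongly_self_sustaining m taub mub tau mu0 sigma0 eps \<longleftrightarrow>
     self_sustaining m taub mub tau mu0 sigma0 eps \<and>
     (\<lambda>t. sigsq m taub tau sigma0 t + Varmu m taub tau sigma0 t) \<longlonglongrightarrow> 0"

end

theory Submission
  imports Defs
begin

text \<open>One generation moves the expected mean away from \<open>mu0\<close> by at most
  \<open>|mu0 - mub| taub / (taub + m t * tau)\<close>. For \<open>m t * tau = taub * A * t powr (1 + c)\<close> these
  increments are dominated by \<open>s powr -(1 + c) / A\<close>, whose sum is at most \<open>(1 + 1/c) / A\<close> by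
  comparison with the integral of \<open>u powr -(1 + c)\<close>; the constant \<open>A\<close> is chosen to make the total
  drift exactly \<open>eps\<close>. The total variance \<open>W t = sigsq t + Varmu t\<close> satisfies
  \<open>W (t + 1) \<le> \<beta> t * (tau * W t + 2)\<close> with \<open>\<beta> t = 1 / (taub + m (t + 1) * tau) \<rightarrow> 0\<close>,
  which forces \<open>W t \<rightarrow> 0\<close>.\<close>

lemma powr_neg_diff_ge:
  fixes t c :: real
  assumes "t > 0" "c > 0"
  shows "c * (t + 1) powr (-(1 + c)) \<le> t powr (-c) - (t + 1) powr (-c)"
proof -
  have "((\<lambda>u. u powr (-c)) has_real_derivative -c * x powr (-c - 1)) (at x)" if "t \<le> x" for x
    using assms that by (intro has_real_derivative_powr) auto
  then obtain z where z: "t < z" "z < t + 1"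
    and mvt: "(t + 1) powr (-c) - t powr (-c) = (t + 1 - t) * (-c * z powr (-c - 1))"
    using MVT2[of t "t + 1" "\<lambda>u. u powr (-c)" "\<lambda>x. -c * x powr (-c - 1)"] by auto
  have "-(1 + c) = -c - 1" by simp
  then have "c * (t + 1) powr (-(1 + c)) \<le> c * z powr (-c - 1)"
    using assms z by (simp only:) (intro mult_left_mono powr_mono2', auto)
  with mvt show ?thesis by simp
qed

lemma sum_powr_neg_le:
  fixes c :: real
  assumes "c > 0"
  shows "(\<Sum>s = 1..t. real s powr (-(1 + c))) \<le> 1 + 1 / c"
proof -
  have tail: "(\<Sum>s = 1..Suc n. real s powr (-(1 + c))) \<le> 1 + (1 - real (Suc n) powr (-c)) / c"
    for n
  proof (induction n)
    case 0
    then show ?case by simp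
  next
    case (Suc n)
    have "c * real (Suc (Suc n)) powr (-(1 + c))
          \<le> real (Suc n) powr (-c) - real (Suc (Suc n)) powr (-c)"
      using powr_neg_diff_ge[of "real (Suc n)" c] assms by (simp add: add.commute)
    with Suc assms show ?case by (simp add: field_simps)
  qed
  show ?thesis
  proof (cases t)
    case (Suc n)
    have "0 \<le> real (Suc n) powr (-c) / c" using assms by simp
    with tail[of n] Suc show ?thesis by (simp add: diff_divide_distrib)
  qed (use assms in simp)
qed

lemma sum_inverse_one_plus_powr_le:
  fixes A c :: real
  assumes "A > 0" "c > 0"
  shows "(\<Sum>s = 1..t. 1 / (1 + A * real s powr (1 + c))) \<le> (1 + 1 / c) / A"
proof -
  have "(\<Sum>s = 1..t. 1 / (1 + A * real s powr (1 + c)))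
        \<le> (\<Sum>s = 1..t. real s powr (-(1 + c)) / A)"
  proof (rule sum_mono)
    fix s assume "s \<in> {1..t}"
    then have pos: "real s powr (1 + c) > 0" using assms by simp
    then have "1 / (1 + A * real s powr (1 + c)) \<le> 1 / (A * real s powr (1 + c))"
      using pos assms by (intro divide_left_mono) (auto intro!: mult_pos_pos add_pos_pos)
    also have "\<dots> = real s powr (-(1 + c)) / A"
      using pos assms unfolding powr_minus by (simp add: field_simps)
    finally show "1 / (1 + A * real s powr (1 + c)) \<le> real s powr (-(1 + c)) / A" .
  qed
  also have "\<dots> = (\<Sum>s = 1..t. real s powr (-(1 + c))) / A"
    by (simp add: sum_divide_distrib)
  also have "\<dots> \<le> (1 + 1 / c) / A"
    using sum_powr_neg_le[OF assms(2)] assms(1) by (intro divide_right_mono) auto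
  finally show ?thesis .
qed

lemma convex_comb_dist_le:
  fixes a p x y z :: real
  assumes "a > 0" "p \<ge> 0"
  shows "\<bar>(a * y + p * x) / (a + p) - z\<bar> \<le> \<bar>x - z\<bar> + \<bar>z - y\<bar> * (a / (a + p))"
proof -
  have "a + p \<noteq> 0" using assms by simp
  then have "(a * y + p * x) / (a + p) - z = p / (a + p) * (x - z) + a / (a + p) * (y - z)"
    by (simp add: divide_simps) (simp add: algebra_simps)
  also have "\<bar>\<dots>\<bar> \<le> p / (a + p) * \<bar>x - z\<bar> + a / (a + p) * \<bar>z - y\<bar>"
    using assms by (auto intro!: order.trans[OF abs_triangle_ineq] simp: abs_mult abs_minus_commute)
  also have "\<dots> \<le> \<bar>x - z\<bar> + a / (a + p) * \<bar>z - y\<bar>"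
    using assms by (intro add_right_mono mult_left_le_one_le) auto
  finally show ?thesis by (simp add: mult.commute)
qed

lemma Emu_dev_le:
  assumes "taub > 0" "tau > 0" "\<And>t. m t \<ge> 0"
  shows "\<bar>Emu m taub mub tau mu0 t - mu0\<bar>
           \<le> \<bar>mu0 - mub\<bar> * (\<Sum>s = 1..t. taub / (taub + m s * tau))"
proof (induction t)
  case 0
  then show ?case by simp
next
  case (Suc t)
  have "\<bar>Emu m taub mub tau mu0 (Suc t) - mu0\<bar>
        \<le> \<bar>Emu m taub mub tau mu0 t - mu0\<bar>
           + \<bar>mu0 - mub\<bar> * (taub / (taub + m (Suc t) * tau))"
    using convex_comb_dist_le[of taub "m (Suc t) * tau"] assms by (simp add: mult.assoc)
  with Suc show ?case by (simp add: distrib_left)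
qed

lemma sigsq_nonneg:
  assumes "taub > 0" "tau > 0" "\<And>t. m t \<ge> 0"
  shows "sigsq m taub tau sigma0 t \<ge> 0"
  using assms by (cases t) (auto intro!: add_pos_nonneg)

lemma Varmu_nonneg:
  assumes "taub > 0" "tau > 0" "\<And>t. m t \<ge> 0"
  shows "Varmu m taub tau sigma0 t \<ge> 0"
  using sigsq_nonneg[OF assms] assms by (induction t) auto

text \<open>The contraction factor \<open>m (t + 1) * tau / (taub + m (t + 1) * tau) \<le> 1\<close> of the variance
  recursion is simply dropped.\<close>

lemma total_variance_Suc_le:
  fixes sigma0 :: real
  assumes "taub > 0" "tau > 0" "\<And>t. m t \<ge> 0"
  defines "W \<equiv> \<lambda>t. sigsq m taub tau sigma0 t + Varmu m taub tau sigma0 t"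
  shows "W (Suc t) \<le> 1 / (taub + m (Suc t) * tau) * (tau * W t + 2)"
proof -
  define P where "P = taub + m (Suc t) * tau"
  define q where "q = m (Suc t) * tau / P"
  have P: "P > 0" using assms by (simp add: P_def add_pos_nonneg)
  have q: "0 \<le> q" "q \<le> 1" using assms P by (auto simp: q_def P_def divide_simps)
  have W0: "W t \<ge> 0"
    using sigsq_nonneg[OF assms(1-3)] Varmu_nonneg[OF assms(1-3)] by (simp add: W_def add_nonneg_nonneg)
  have "m (Suc t) * tau\<^sup>2 / P\<^sup>2 * (W t + 1 / tau) = q * (tau / P * W t + 1 / P)"
    using P assms(2) by (simp add: q_def field_simps power2_eq_square)
  then have "Varmu m taub tau sigma0 (Suc t) = q * (tau / P * W t + 1 / P)"
    by (simp add: W_def P_def add.commute)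
  also have "\<dots> \<le> tau / P * W t + 1 / P"
    using q P W0 assms by (intro mult_left_le_one_le) auto
  finally have "W (Suc t) \<le> 1 / P + (tau / P * W t + 1 / P)"
    by (simp add: W_def P_def)
  also have "\<dots> = 1 / P * (tau * W t + 2)"
    using P by (simp add: field_simps)
  finally show ?thesis by (simp add: P_def)
qed

lemma LIMSEQ_zero_of_affine_recurrence:
  fixes W g h :: "nat \<Rightarrow> real"
  assumes W0: "\<And>n. 0 \<le> W n" and W_Suc: "\<And>n. W (Suc n) \<le> g n * W n + h n"
    and g0: "\<And>n. 0 \<le> g n" and g: "g \<longlonglongrightarrow> 0" and h: "h \<longlonglongrightarrow> 0"
  shows "W \<longlonglongrightarrow> 0"
proof -
  have "eventually (\<lambda>n. g n < 1 / 2 \<and> h n < 1) sequentially"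
    using g h by (intro eventually_conj order_tendstoD(2)) auto
  then obtain N where N: "\<And>n. n \<ge> N \<Longrightarrow> g n < 1 / 2 \<and> h n < 1"
    by (auto simp: eventually_sequentially)
  define M where "M = max (W N) 2"
  have bounded: "W n \<le> M" if "n \<ge> N" for n
    using that
  proof (induction n rule: dec_induct)
    case base
    then show ?case by (simp add: M_def)
  next
    case (step n)
    have "M \<ge> 0" by (simp add: M_def)
    then have "g n * M \<le> 1 / 2 * M" using N[OF step(1)] by (intro mult_right_mono) auto
    moreover have "W (Suc n) \<le> g n * M + h n"
      using W_Suc[of n] step g0[of n] by (meson add_right_mono mult_left_mono order.trans)
    moreover have "M \<ge> 2" by (simp add: M_def)
    ultimately show ?case using N[OF step(1)] by linarith
  qed
  have "(\<lambda>n. W (Suc n)) \<longlonglongrightarrow> 0"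
  proof (rule tendsto_sandwich[OF _ _ tendsto_const])
    show "eventually (\<lambda>n. 0 \<le> W (Suc n)) sequentially" using W0 by simp
    show "eventually (\<lambda>n. W (Suc n) \<le> g n * M + h n) sequentially"
      unfolding eventually_sequentially
      using W_Suc g0 bounded by (meson add_right_mono mult_left_mono order.trans)
    show "(\<lambda>n. g n * M + h n) \<longlonglongrightarrow> 0"
      using tendsto_add[OF tendsto_mult[OF g tendsto_const[of M]] h] by simp
  qed
  then show ?thesis by (rule LIMSEQ_imp_Suc)
qed

lemma total_variance_tendsto_zero:
  assumes "taub > 0" "tau > 0" "\<And>t. m t \<ge> 0" and m: "filterlim m at_top sequentially"
  shows "(\<lambda>t. sigsq m taub tau sigma0 t + Varmu m taub tau sigma0 t) \<longlonglongrightarrow> 0"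
proof -
  define \<beta> where "\<beta> = (\<lambda>t. 1 / (taub + m (Suc t) * tau))"
  have "filterlim (\<lambda>t. m t * tau) at_top sequentially"
    using filterlim_tendsto_pos_mult_at_top[OF tendsto_const assms(2) m] by (simp add: mult.commute)
  then have "filterlim (\<lambda>t. taub + m t * tau) at_top sequentially"
    by (rule filterlim_tendsto_add_at_top[OF tendsto_const])
  then have "(\<lambda>t. inverse (taub + m (Suc t) * tau)) \<longlonglongrightarrow> 0"
    using filterlim_sequentially_Suc[of "\<lambda>t. taub + m t * tau"] by (intro tendsto_inverse_0_at_top) simp
  then have \<beta>: "\<beta> \<longlonglongrightarrow> 0" by (simp add: \<beta>_def divide_inverse)
  have \<beta>0: "\<beta> t \<ge> 0" for t using assms by (simp add: \<beta>_def add_nonneg_nonneg)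
  show ?thesis
  proof (rule LIMSEQ_zero_of_affine_recurrence)
    show "0 \<le> sigsq m taub tau sigma0 n + Varmu m taub tau sigma0 n" for n
      using sigsq_nonneg[OF assms(1-3)] Varmu_nonneg[OF assms(1-3)] by (simp add: add_nonneg_nonneg)
    show "sigsq m taub tau sigma0 (Suc n) + Varmu m taub tau sigma0 (Suc n)
          \<le> (tau * \<beta> n) * (sigsq m taub tau sigma0 n + Varmu m taub tau sigma0 n) + 2 * \<beta> n" for n
      using total_variance_Suc_le[OF assms(1-3)] by (simp add: \<beta>_def algebra_simps)
    show "0 \<le> tau * \<beta> n" for n using \<beta>0 assms by simp
    show "(\<lambda>n. tau * \<beta> n) \<longlonglongrightarrow> 0" "(\<lambda>n. 2 * \<beta> n) \<longlonglongrightarrow> 0"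
      using tendsto_mult_right_zero[OF \<beta>] by auto
  qed
qed

lemma Emu_dev_le_power_law:
  fixes A c :: real
  assumes "taub > 0" "tau > 0" "A > 0" "c > 0"
    and m_tau: "\<And>t. m t * tau = taub * (A * real t powr (1 + c))"
  shows "\<bar>Emu m taub mub tau mu0 t - mu0\<bar> \<le> \<bar>mu0 - mub\<bar> * ((1 + 1 / c) / A)"
proof -
  have m0: "m t \<ge> 0" for t
  proof -
    have "0 \<le> m t * tau" using assms by (simp add: m_tau)
    with assms(2) show ?thesis by (simp add: zero_le_mult_iff)
  qed
  have "taub / (taub + m s * tau) = 1 / (1 + A * real s powr (1 + c))" for s
  proof -
    have "taub + m s * tau = taub * (1 + A * real s powr (1 + c))"
      unfolding m_tau by (simp add: algebra_simps)
    then show ?thesis using assms(1) by simp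
  qed
  then have "\<bar>Emu m taub mub tau mu0 t - mu0\<bar>
        \<le> \<bar>mu0 - mub\<bar> * (\<Sum>s = 1..t. 1 / (1 + A * real s powr (1 + c)))"
    using Emu_dev_le[of taub tau m, OF assms(1,2) m0] by simp
  also have "\<dots> \<le> \<bar>mu0 - mub\<bar> * ((1 + 1 / c) / A)"
    using sum_inverse_one_plus_powr_le[OF assms(3,4)] by (intro mult_left_mono) auto
  finally show ?thesis .
qed

lemma filterlim_real_powr_sequentially:
  fixes p :: real
  assumes "p \<ge> 1"
  shows "filterlim (\<lambda>n. real n powr p) at_top sequentially"
proof -
  have "real n \<le> real n powr p" for n :: nat
    using powr_mono[of 1 p "real n"] assms by (cases "n = 0") auto
  then show ?thesis
    by (intro filterlim_at_top_mono[OF filterlim_real_sequentially] always_eventually) auto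
qed

theorem theorem3:
  fixes mub sigmabar sigma mu0 sigma0 eps c :: real
  assumes "sigmabar > 0" and "sigma > 0"
    and "0 < eps" and "eps < 1" and "c > 0"
    and "mu0 \<noteq> mub"
  defines "m \<equiv> (\<lambda>t::nat. \<bar>mu0 - mub\<bar> / eps * (1 + 1 / c) * (sigma / sigmabar)\<^sup>2
                         * real t powr (1 + c))"
  shows "strongly_self_sustaining m (1 / sigmabar\<^sup>2) mub (1 / sigma\<^sup>2) mu0 sigma0 eps"
proof -
  define taub where "taub = 1 / sigmabar\<^sup>2"
  define tau where "tau = 1 / sigma\<^sup>2"
  define A where "A = \<bar>mu0 - mub\<bar> / eps * (1 + 1 / c)"
  have "0 < 1 + 1 / c" using assms by (simp add: add_pos_pos)
  then have pos: "taub > 0" "tau > 0" "A > 0" "A * (sigma / sigmabar)\<^sup>2 > 0"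
    using assms by (auto simp: taub_def tau_def A_def)
  have m_tau: "m t * tau = taub * (A * real t powr (1 + c))" for t
    using assms by (simp add: m_def taub_def tau_def A_def field_simps power2_eq_square)
  have "\<bar>mu0 - mub\<bar> * ((1 + 1 / c) / A) = eps"
    using assms \<open>0 < 1 + 1 / c\<close> by (simp add: A_def)
  then have mean: "\<bar>Emu m taub mub tau mu0 t - mu0\<bar> \<le> eps" for t
    using Emu_dev_le_power_law[OF pos(1-3) assms(5) m_tau] by metis
  have "filterlim (\<lambda>t. A * (sigma / sigmabar)\<^sup>2 * real t powr (1 + c)) at_top sequentially"
    using assms(5) pos(4) by (intro filterlim_tendsto_pos_mult_at_top[OF tendsto_const]
        filterlim_real_powr_sequentially) auto
  then have "filterlim m at_top sequentially" by (simp add: m_def A_def)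
  moreover have "m t \<ge> 0" for t using assms by (simp add: m_def)
  ultimately have var: "(\<lambda>t. sigsq m taub tau sigma0 t + Varmu m taub tau sigma0 t) \<longlonglongrightarrow> 0"
    using total_variance_tendsto_zero[OF pos(1,2)] by blast
  show ?thesis
    unfolding strongly_self_sustaining_def self_sustaining_def
      taub_def[symmetric] tau_def[symmetric]
    using mean var convergent_imp_Bseq[OF convergentI[OF var]] by blast
qed

end
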